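(* Let $P\subseteq\mathbb{R}^n$ be an $n$-dimensional lattice simplex, with vertices $v_0,\dots,v_n$, and let $a_i$ be the lattice distance of $v_i$ from the facet of $P$ not containing $v_i$. (1) If $\mu(P)>\frac{n+1}{2}$, or if $\mu(P)=\frac{n+1}{2}$ and $a_i\neq2$ for some $i$, then $P$ is a lattice pyramid. (2) If $\mu(P)\ge\frac{n+1}{2}$ and $P$ is not unimodularly equivalent to $2\Delta_n$, then $P$ has lattice width one.
   Context: Lattice distance from a facet $F=\{\langle c,x\rangle=b\}$ (with $c\in(\mathbb{Z}^n)^*$ primitive inner normal) is $d_F(y)=\langle c,y\rangle-b$; $d_P(y):=\min_F d_F(y)$ over facets, $P^{(s)}:=\{y:d_P(y)\ge s\}$, $\mu(P):=(\sup\{s>0:P^{(s)}\neq\emptyset\})^{-1}$. A lattice simplex is a lattice pyramid if some vertex has lattice distance $1$ from the opposite facet (i.e. $P$ is unimodularly equivalent to $\mathrm{conv}(Q\times\{0\},(0,\dots,0,1))$ for a lattice polytope $Q\subseteq\mathbb{R}^{n-1}$). $\Delta_n=\mathrm{conv}(0,e_1,\dots,e_n)$. The lattice width of $P$ is the minimum over nonzero $u\in(\mathbb{Z}^n)^*$ of $\max_{x\in P}\langle u,x\rangle-\min_{x\in P}\langle u,x\rangle$. Unimodular equivalence is via an affine lattice automorphism of $\mathbb{Z}^n$. *)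

theory Defs
  imports "HOL-Analysis.Analysis"
begin

text \<open>Lattice points of Z^n inside R^n (index type 'n, n = CARD('n)).\<close>
definition lattice_point :: "real^'n \<Rightarrow> bool" where
  "lattice_point x \<longleftrightarrow> (\<forall>i. x $ i \<in> \<int>)"

definition primitive_vec :: "real^'n \<Rightarrow> bool" where
  "primitive_vec c \<longleftrightarrow> lattice_point c \<and> c \<noteq> 0 \<and>
     (\<forall>k::int. \<forall>c'. lattice_point c' \<and> c = of_int k *\<^sub>R c' \<longrightarrow> \<bar>k\<bar> = 1)"

definition prim_inner_normal :: "(real^'n) set \<Rightarrow> (real^'n) set \<Rightarrow> real^'n \<Rightarrow> real \<Rightarrow> bool" where
  "prim_inner_normal P F c b \<longleftrightarrow> primitive_vec c \<and>
     (\<forall>x\<in>F. c \<bullet> x = b) \<and> (\<forall>x\<in>P. c \<bullet> x \<ge> b)"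

definition facet_dist :: "(real^'n) set \<Rightarrow> (real^'n) set \<Rightarrow> real^'n \<Rightarrow> real" where
  "facet_dist P F y = (THE d. \<exists>c b. prim_inner_normal P F c b \<and> d = c \<bullet> y - b)"

definition poly_dist :: "(real^'n) set \<Rightarrow> real^'n \<Rightarrow> real" where
  "poly_dist P y = Min {facet_dist P F y | F. F facet_of P}"

definition inner_level :: "(real^'n) set \<Rightarrow> real \<Rightarrow> (real^'n) set" where
  "inner_level P s = {y. poly_dist P y \<ge> s}"

definition mu :: "(real^'n) set \<Rightarrow> real" where
  "mu P = inverse (Sup {s. s > 0 \<and> inner_level P s \<noteq> {}})"

definition lattice_pyramid :: "(real^'n) set \<Rightarrow> bool" where
  "lattice_pyramid P \<longleftrightarrow> (\<exists>F x. F facet_of P \<and> x extreme_point_of P \<and> x \<notin> F \<and> facet_dist P F x = 1)"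

definition unimodular_map :: "(real^'n \<Rightarrow> real^'n) \<Rightarrow> bool" where
  "unimodular_map f \<longleftrightarrow> (\<exists>(A::real^'n^'n) t. (\<forall>i j. A $ i $ j \<in> \<int>) \<and> \<bar>det A\<bar> = 1 \<and>
      lattice_point t \<and> f = (\<lambda>x. A *v x + t))"

definition unimod_equiv :: "(real^'n) set \<Rightarrow> (real^'n) set \<Rightarrow> bool" where
  "unimod_equiv P Q \<longleftrightarrow> (\<exists>f. unimodular_map f \<and> f ` P = Q)"

definition std_simplex :: "(real^'n) set" where
  "std_simplex = convex hull (insert 0 {axis i 1 | i. True})"

definition lattice_width :: "(real^'n) set \<Rightarrow> real" where
  "lattice_width P = (INF u\<in>{u. lattice_point u \<and> u \<noteq> 0}.
      (SUP x\<in>P. u \<bullet> x) - (INF x\<in>P. u \<bullet> x))"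

end

theory Submission
  imports Defs
begin

text \<open>
  The facet distances divided
  by the \<open>a\<^sub>i\<close> are the barycentric coordinates, so the point with barycentric coordinates
  proportional to \<open>1/a\<^sub>i\<close> is at distance \<open>1/(\<Sum> 1/a\<^sub>i)\<close> from every facet and nothing deeper
  exists: \<open>\<mu>(P) = \<Sum> 1/a\<^sub>i\<close>. As the \<open>a\<^sub>i\<close> are positive integers, \<open>\<mu>(P) \<ge> (n+1)/2\<close> forces either
  some \<open>a\<^sub>i = 1\<close> (a pyramid, of width one along that facet normal) or all \<open>a\<^sub>i = 2\<close>. In the
  latter case the primitive normals satisfy \<open>c\<^sub>i \<bullet> (v\<^sub>j - v\<^sub>0) = 2\<delta>\<^sub>i\<^sub>j\<close>. If all edges \<open>v\<^sub>j - v\<^sub>0\<close>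
  are even, the halved edges form an integral inverse of the matrix of normals, which is then
  unimodular and maps \<open>P\<close> onto \<open>2\<Delta>\<^sub>n\<close>. Otherwise some coordinate functional is odd on some
  edge; correcting it by integer multiples of the \<open>c\<^sub>i\<close> gives a lattice functional that takes
  only two consecutive values on the vertices.
\<close>

lemma lattice_point_add: "lattice_point a \<Longrightarrow> lattice_point b \<Longrightarrow> lattice_point (a + b)"
  by (auto simp: lattice_point_def)

lemma lattice_point_diff: "lattice_point a \<Longrightarrow> lattice_point b \<Longrightarrow> lattice_point (a - b)"
  by (auto simp: lattice_point_def)

lemma lattice_point_scaleR: "k \<in> \<int> \<Longrightarrow> lattice_point a \<Longrightarrow> lattice_point (k *\<^sub>R a)"
  by (auto simp: lattice_point_def)

lemma lattice_point_sum: "(\<And>i. i \<in> S \<Longrightarrow> lattice_point (f i)) \<Longrightarrow> lattice_point (sum f S)"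
  by (auto simp: lattice_point_def sum_component intro!: Ints_sum)

lemma lattice_point_axis: "lattice_point (axis i 1)"
  by (auto simp: lattice_point_def axis_def)

lemma inner_lattice_point_Ints:
  "lattice_point (a::real^'n) \<Longrightarrow> lattice_point b \<Longrightarrow> a \<bullet> b \<in> \<int>"
  by (auto simp: lattice_point_def inner_vec_def inner_real_def intro!: Ints_sum Ints_mult)

lemma det_Ints:
  fixes A :: "real^'n^'n"
  shows "(\<And>i j. A $ i $ j \<in> \<int>) \<Longrightarrow> det A \<in> \<int>"
  unfolding det_def by (auto intro!: Ints_sum Ints_mult Ints_prod)

lemma primitive_vec_lattice_point: "primitive_vec c \<Longrightarrow> lattice_point c"
  and primitive_vec_nonzero: "primitive_vec c \<Longrightarrow> c \<noteq> 0"
  by (simp_all add: primitive_vec_def)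

lemma Ints_abs_ge_1: "x \<in> \<int> \<Longrightarrow> x \<noteq> 0 \<Longrightarrow> \<bar>x\<bar> \<ge> (1::real)"
  by (elim Ints_cases) auto

lemma multiplier_le_component:
  assumes "lattice_point c" "C = real k *\<^sub>R c" "C $ r \<noteq> 0"
  shows "real k \<le> \<bar>C $ r\<bar>"
proof -
  have "c $ r \<in> \<int>" "c $ r \<noteq> 0"
    using assms by (auto simp: lattice_point_def)
  then have "\<bar>c $ r\<bar> \<ge> 1" by (rule Ints_abs_ge_1)
  moreover have "\<bar>C $ r\<bar> = real k * \<bar>c $ r\<bar>"
    using assms(2) by (simp add: abs_mult)
  ultimately show ?thesis
    by (metis mult.right_neutral mult_left_mono of_nat_0_le_iff)
qed

text \<open>Divide out the largest possible positive integer factor.\<close>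
lemma lattice_point_primitive_multiple:
  assumes C: "lattice_point C" "C \<noteq> 0"
  obtains k :: nat and c where "k > 0" "primitive_vec c" "C = real k *\<^sub>R c"
proof -
  obtain r where r: "C $ r \<noteq> 0" using C(2) by (metis vec_eq_iff zero_index)
  define K where "K = {k::nat. k > 0 \<and> (\<exists>c. lattice_point c \<and> C = real k *\<^sub>R c)}"
  have "K \<subseteq> {..nat \<lceil>\<bar>C $ r\<bar>\<rceil>}"
  proof
    fix k assume "k \<in> K"
    then have "real k \<le> \<bar>C $ r\<bar>"
      using multiplier_le_component[OF _ _ r] by (auto simp: K_def)
    then show "k \<in> {..nat \<lceil>\<bar>C $ r\<bar>\<rceil>}" by (simp add: le_nat_iff le_ceiling_iff)
  qed
  then have fin: "finite K" by (rule finite_subset) simp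
  have "1 \<in> K" using C(1) by (auto simp: K_def)
  define k where "k = Max K"
  have "k \<in> K" unfolding k_def using fin \<open>1 \<in> K\<close> by (intro Max_in) auto
  then obtain c where c: "k > 0" "lattice_point c" "C = real k *\<^sub>R c"
    unfolding K_def by blast
  have "primitive_vec c"
    unfolding primitive_vec_def
  proof (intro conjI allI impI)
    show "c \<noteq> 0" using c C(2) by auto
    fix l :: int and c' assume l: "lattice_point c' \<and> c = of_int l *\<^sub>R c'"
    then have "l \<noteq> 0" using \<open>c \<noteq> 0\<close> by auto
    have "C = real (k * nat \<bar>l\<bar>) *\<^sub>R (of_int (sgn l) *\<^sub>R c')"
      using l c(3) \<open>l \<noteq> 0\<close> by (auto simp: abs_if sgn_if)
    moreover have "lattice_point (of_int (sgn l) *\<^sub>R c')"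
      using l by (intro lattice_point_scaleR) auto
    ultimately have "k * nat \<bar>l\<bar> \<in> K" using c(1) \<open>l \<noteq> 0\<close> by (auto simp: K_def)
    then have "k * nat \<bar>l\<bar> \<le> k * 1" unfolding k_def using fin by simp
    then have "nat \<bar>l\<bar> \<le> 1" using c(1) by (metis mult_le_cancel1)
    then show "\<bar>l\<bar> = 1" using \<open>l \<noteq> 0\<close> by linarith
  qed (use c in auto)
  then show thesis using that c by blast
qed

text \<open>By Bezout, both vectors are integer multiples of the lattice point \<open>w\<close> below.\<close>
lemma primitive_vec_eq_if_positive_multiples:
  fixes c c' :: "real^'n"
  assumes prim: "primitive_vec c" "primitive_vec c'" and pos: "p > 0" "q > 0"
    and eq: "of_int p *\<^sub>R c = of_int q *\<^sub>R c'"
  shows "c = c'"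
proof -
  define g where "g = gcd p q"
  obtain x y where "x * p + y * q = g" unfolding g_def using bezout_int by blast
  then have xy: "real_of_int x * of_int p + of_int y * of_int q = of_int g"
    by (metis of_int_add of_int_mult)
  have g0: "g > 0" using pos by (simp add: g_def)
  obtain p' q' where p': "p = g * p'" and q': "q = g * q'"
    unfolding g_def by (meson gcd_dvd1 gcd_dvd2 dvdE)
  define w where "w = of_int x *\<^sub>R c' + of_int y *\<^sub>R c"
  have "lattice_point w"
    using prim unfolding w_def
    by (intro lattice_point_add lattice_point_scaleR) (auto dest: primitive_vec_lattice_point)
  have "of_int g *\<^sub>R (of_int q' *\<^sub>R w) = (of_int x * of_int p + of_int y * of_int q) *\<^sub>R c"
    using arg_cong[OF eq, of "scaleR (of_int x)"] q'
    by (simp add: w_def algebra_simps)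
  then have "of_int g *\<^sub>R c = of_int g *\<^sub>R (of_int q' *\<^sub>R w)"
    by (simp only: xy)
  then have c: "c = of_int q' *\<^sub>R w" by (rule scaleR_left_imp_eq[rotated]) (use g0 in simp)
  have "of_int g *\<^sub>R (of_int p' *\<^sub>R w) = (of_int x * of_int p + of_int y * of_int q) *\<^sub>R c'"
    using arg_cong[OF eq, of "scaleR (of_int y)"] p'
    by (simp add: w_def algebra_simps)
  then have "of_int g *\<^sub>R c' = of_int g *\<^sub>R (of_int p' *\<^sub>R w)"
    by (simp only: xy)
  then have c': "c' = of_int p' *\<^sub>R w" by (rule scaleR_left_imp_eq[rotated]) (use g0 in simp)
  have "\<bar>q'\<bar> = 1" "\<bar>p'\<bar> = 1"
    using prim c c' \<open>lattice_point w\<close> unfolding primitive_vec_def by blast+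
  moreover have "q' > 0" "p' > 0"
    using p' q' g0 pos by (auto simp: zero_less_mult_iff)
  ultimately show ?thesis using c c' by simp
qed

lemma lattice_scaled_solution:
  fixes R :: "real^'n^'n"
  assumes R: "\<And>i j. R $ i $ j \<in> \<int>" and d: "det R \<noteq> 0" and t: "lattice_point t"
  obtains C where "lattice_point C" "R *v C = (det R)\<^sup>2 *\<^sub>R t"
proof -
  define c where "c = (\<chi> k. det (\<chi> i j. if j = k then t $ i else R $ i $ j) / det R)"
  have Rc: "R *v c = t" using cramer[OF d] c_def by blast
  have "lattice_point (det R *\<^sub>R c)"
    using d R t by (auto simp: lattice_point_def c_def intro!: det_Ints)
  then have "lattice_point (det R *\<^sub>R (det R *\<^sub>R c))"
    by (rule lattice_point_scaleR[OF det_Ints[OF R]])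
  moreover have "R *v (det R *\<^sub>R (det R *\<^sub>R c)) = (det R)\<^sup>2 *\<^sub>R t"
    by (simp add: matrix_vector_mult_scaleR Rc power2_eq_square)
  ultimately show thesis by (rule that)
qed

lemma abs_det_eq_1_if_integral_inverse:
  fixes A B :: "real^'n^'n"
  assumes "\<And>i j. A $ i $ j \<in> \<int>" "\<And>i j. B $ i $ j \<in> \<int>" "A ** B = mat 1"
  shows "\<bar>det A\<bar> = 1"
proof -
  obtain a b where a: "det A = of_int a" and b: "det B = of_int b"
    using det_Ints[of A] det_Ints[of B] assms(1,2) by (metis Ints_cases)
  have "of_int (a * b) = (1::real)"
    using det_mul[of A B] assms(3) a b by simp
  then have "a * b = 1" by (simp only: of_int_eq_1_iff)
  then show ?thesis using a zmult_eq_1_iff by fastforce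
qed

lemma affine_image_convex_hull:
  fixes A :: "real^'n^'m"
  shows "(\<lambda>x. A *v x + t) ` (convex hull S) = convex hull ((\<lambda>x. A *v x + t) ` S)"
proof -
  have "(\<lambda>x. A *v x + t) ` (convex hull S) = (\<lambda>x. t + x) ` (\<lambda>x. A *v x) ` (convex hull S)"
    by (auto simp: image_image add.commute)
  also have "\<dots> = convex hull ((\<lambda>x. t + x) ` (\<lambda>x. A *v x) ` S)"
    by (simp add: convex_hull_linear_image[OF matrix_vector_mul_linear] convex_hull_translation)
  finally show ?thesis by (simp add: image_image add.commute)
qed

lemma matrix_mult_transpose_component:
  fixes A B :: "real^'n^'m"
  shows "(A ** transpose B) $ i $ j = A $ i \<bullet> B $ j"
  by (simp add: matrix_matrix_mult_def transpose_def inner_vec_def)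

lemma ex_bij_betw_UNIV_1_CARD: "\<exists>\<tau> :: 'n::finite \<Rightarrow> nat. bij_betw \<tau> UNIV {1..CARD('n)}"
  using ex_bij_betw_nat_finite_1[of "UNIV :: 'n set"] bij_betw_inv_into by auto

locale lattice_simplex =
  fixes v :: "nat \<Rightarrow> real^'n"
  assumes lattice_vertex: "\<And>i. i \<le> CARD('n) \<Longrightarrow> lattice_point (v i)"
    and inj_vertex: "inj_on v {..CARD('n)}"
    and affine_independent: "\<not> affine_dependent (v ` {..CARD('n)})"
begin

definition vertex_hull :: "(real^'n) set" where
  "vertex_hull = convex hull (v ` {..CARD('n)})"

definition opposite_facet :: "nat \<Rightarrow> (real^'n) set" where
  "opposite_facet i = convex hull (v ` ({..CARD('n)} - {i}))"

lemma ex_other_vertex: "i \<le> CARD('n) \<Longrightarrow> \<exists>j\<le>CARD('n). j \<noteq> i"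
  by (rule exI[of _ "if i = 0 then 1 else 0"]) auto

lemma vertex_in_vertex_hull: "j \<le> CARD('n) \<Longrightarrow> v j \<in> vertex_hull"
  by (auto simp: vertex_hull_def intro: hull_inc)

lemma vertex_hull_subset_halfspace_le:
  "(\<And>j. j \<le> CARD('n) \<Longrightarrow> u \<bullet> v j \<le> M) \<Longrightarrow> vertex_hull \<subseteq> {x. u \<bullet> x \<le> M}"
  unfolding vertex_hull_def by (rule hull_minimal) (auto simp: convex_halfspace_le)

lemma vertex_hull_subset_halfspace_ge:
  "(\<And>j. j \<le> CARD('n) \<Longrightarrow> M \<le> u \<bullet> v j) \<Longrightarrow> vertex_hull \<subseteq> {x. M \<le> u \<bullet> x}"
  unfolding vertex_hull_def by (rule hull_minimal) (auto simp: convex_halfspace_ge)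

lemma eq_zero_if_inner_const_on_vertices:
  assumes "\<And>j. j \<le> CARD('n) \<Longrightarrow> d \<bullet> v j = e"
  shows "d = 0"
proof -
  have "card (v ` {..CARD('n)}) = Suc CARD('n)" using inj_vertex by (simp add: card_image)
  then have "affine hull (v ` {..CARD('n)}) = UNIV"
    using affine_independent by (intro affine_independent_span_eq) auto
  moreover have "affine hull (v ` {..CARD('n)}) \<subseteq> {x. d \<bullet> x = e}"
    using assms by (intro hull_minimal) (auto simp: affine_hyperplane)
  ultimately have "\<And>x. d \<bullet> x = e" by auto
  from this[of 0] this[of d] show ?thesis by simp
qed

text \<open>A fixed enumeration of the edges \<open>v j - v 0\<close>, \<open>1 \<le> j \<le> n\<close>, by the coordinate type.\<close>
definition edge_index :: "'n \<Rightarrow> nat" where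
  "edge_index = (SOME \<tau>. bij_betw \<tau> UNIV {1..CARD('n)})"

definition edge_coord :: "nat \<Rightarrow> 'n" where
  "edge_coord = inv edge_index"

lemma bij_edge_index: "bij_betw edge_index UNIV {1..CARD('n)}"
  unfolding edge_index_def using ex_bij_betw_UNIV_1_CARD by (rule someI_ex)

lemma edge_index_range: "edge_index k \<in> {1..CARD('n)}"
  and edge_index_eq_iff: "edge_index k = edge_index l \<longleftrightarrow> k = l"
  and edge_coord_edge_index [simp]: "edge_coord (edge_index k) = k"
  using bij_edge_index by (auto simp: bij_betw_def inj_eq edge_coord_def)

lemma edge_index_edge_coord [simp]: "j \<in> {1..CARD('n)} \<Longrightarrow> edge_index (edge_coord j) = j"
  unfolding edge_coord_def by (rule f_inv_into_f) (use bij_edge_index in \<open>simp add: bij_betw_def\<close>)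

definition edge_matrix :: "real^'n^'n" where
  "edge_matrix = (\<chi> k. v (edge_index k) - v 0)"

lemma edge_matrix_mult: "(edge_matrix *v c) $ k = (v (edge_index k) - v 0) \<bullet> c"
  by (simp add: edge_matrix_def matrix_vector_mul_component)

lemma edge_matrix_Ints: "edge_matrix $ k $ r \<in> \<int>"
  using lattice_vertex[of 0] lattice_vertex[of "edge_index k"] edge_index_range[of k]
  by (simp add: edge_matrix_def lattice_point_def)

lemma det_edge_matrix_nonzero: "det edge_matrix \<noteq> 0"
proof -
  have "inj ((*v) edge_matrix)"
  proof (rule injI)
    fix x y assume "edge_matrix *v x = edge_matrix *v y"
    then have edge: "(v (edge_index k) - v 0) \<bullet> (x - y) = 0" for k
      using edge_matrix_mult[of "x - y" k] by (simp add: matrix_vector_mult_diff_distrib)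
    have "(x - y) \<bullet> v j = (x - y) \<bullet> v 0" if "j \<le> CARD('n)" for j
    proof (cases "j = 0")
      case False
      with that edge[of "edge_coord j"] show ?thesis by (simp add: inner_diff inner_commute)
    qed simp
    then have "x - y = 0" by (rule eq_zero_if_inner_const_on_vertices)
    then show "x = y" by simp
  qed
  then show ?thesis by (simp add: det_nz_iff_inj[symmetric] matrix_vector_mul_linear)
qed

lemma ex_lattice_facet_normal:
  assumes i: "i \<le> CARD('n)"
  obtains C B where "lattice_point C" "\<And>j. j \<le> CARD('n) \<Longrightarrow> j \<noteq> i \<Longrightarrow> C \<bullet> v j = B"
    "B < C \<bullet> v i"
proof -
  define t :: "real^'n" where
    "t = (\<chi> k. if i = 0 then -1 else if edge_index k = i then 1 else 0)"
  have "lattice_point t" by (auto simp: t_def lattice_point_def)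
  with edge_matrix_Ints det_edge_matrix_nonzero
  obtain C where C: "lattice_point C" "edge_matrix *v C = (det edge_matrix)\<^sup>2 *\<^sub>R t"
    by (rule lattice_scaled_solution)
  define D where "D = (det edge_matrix)\<^sup>2"
  have "D > 0" using det_edge_matrix_nonzero by (simp add: D_def)
  have C_edge: "C \<bullet> v j - C \<bullet> v 0 = D * (if i = 0 then -1 else if j = i then 1 else 0)"
    if "j \<in> {1..CARD('n)}" for j
  proof -
    have "C \<bullet> (v j - v 0) = D * t $ edge_coord j"
      using arg_cong[OF C(2), of "\<lambda>x. x $ edge_coord j"] that
      by (simp add: edge_matrix_mult D_def inner_commute)
    then show ?thesis using that by (simp add: t_def inner_diff_right)
  qed
  define B where "B = C \<bullet> v 0 - (if i = 0 then D else 0)"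
  have vertex: "C \<bullet> v j = B" if "j \<le> CARD('n)" "j \<noteq> i" for j
  proof (cases "j = 0")
    case False
    then have "j \<in> {1..CARD('n)}" using that by simp
    then show ?thesis using C_edge[of j] that by (cases "i = 0") (simp_all add: B_def)
  qed (use that in \<open>simp add: B_def\<close>)
  have apex: "B < C \<bullet> v i"
  proof (cases "i = 0")
    case False
    then have "i \<in> {1..CARD('n)}" using i by simp
    then show ?thesis using C_edge[of i] False \<open>D > 0\<close> by (simp add: B_def)
  qed (use \<open>D > 0\<close> in \<open>simp add: B_def\<close>)
  show thesis by (rule that[OF C(1) vertex apex])
qed

definition is_facet_normal :: "nat \<Rightarrow> real^'n \<Rightarrow> real \<Rightarrow> bool" where
  "is_facet_normal i c b \<longleftrightarrow>
     primitive_vec c \<and> (\<forall>j\<le>CARD('n). j \<noteq> i \<longrightarrow> c \<bullet> v j = b) \<and> b < c \<bullet> v i"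

lemma ex_facet_normal:
  assumes i: "i \<le> CARD('n)"
  shows "\<exists>c b. is_facet_normal i c b"
proof -
  obtain C B where CB: "lattice_point C" "\<And>j. j \<le> CARD('n) \<Longrightarrow> j \<noteq> i \<Longrightarrow> C \<bullet> v j = B"
    "B < C \<bullet> v i"
    by (rule ex_lattice_facet_normal[OF i]) blast
  obtain j where "j \<le> CARD('n)" "j \<noteq> i" using ex_other_vertex[OF i] by blast
  have "C \<noteq> 0"
  proof
    assume "C = 0"
    with CB(2)[OF \<open>j \<le> CARD('n)\<close> \<open>j \<noteq> i\<close>] CB(3) show False by simp
  qed
  with CB(1) obtain k c where kc: "k > 0" "primitive_vec c" "C = real k *\<^sub>R c"
    by (rule lattice_point_primitive_multiple)
  have "c \<bullet> v j = B / real k" if "j \<le> CARD('n)" "j \<noteq> i" for j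
    using CB(2)[OF that] kc by (simp add: field_simps)
  moreover have "B / real k < c \<bullet> v i"
    using CB(3) kc by (simp add: field_simps)
  ultimately have "is_facet_normal i c (B / real k)"
    using kc by (simp add: is_facet_normal_def)
  then show ?thesis by blast
qed

definition normal :: "nat \<Rightarrow> real^'n" where
  "normal i = fst (SOME (c, b). is_facet_normal i c b)"

definition offset :: "nat \<Rightarrow> real" where
  "offset i = snd (SOME (c, b). is_facet_normal i c b)"

definition height :: "nat \<Rightarrow> real" where
  "height i = normal i \<bullet> v i - offset i"

lemma is_facet_normal_normal:
  assumes "i \<le> CARD('n)"
  shows "is_facet_normal i (normal i) (offset i)"
proof -
  have "\<exists>cb. case cb of (c, b) \<Rightarrow> is_facet_normal i c b"
    using ex_facet_normal[OF assms] by auto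
  then have "case SOME (c, b). is_facet_normal i c b of (c, b) \<Rightarrow> is_facet_normal i c b"
    by (rule someI_ex)
  then show ?thesis by (simp add: normal_def offset_def case_prod_beta)
qed

lemma
  assumes "i \<le> CARD('n)"
  shows primitive_normal: "primitive_vec (normal i)"
    and lattice_point_normal: "lattice_point (normal i)"
    and normal_vertex: "\<And>j. j \<le> CARD('n) \<Longrightarrow> j \<noteq> i \<Longrightarrow> normal i \<bullet> v j = offset i"
    and height_pos: "height i > 0"
  using is_facet_normal_normal[OF assms]
  by (auto simp: is_facet_normal_def height_def primitive_vec_def)

lemma offset_Ints:
  assumes i: "i \<le> CARD('n)"
  shows "offset i \<in> \<int>"
proof -
  obtain j where "j \<le> CARD('n)" "j \<noteq> i" using ex_other_vertex[OF i] by blast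
  then have "offset i = normal i \<bullet> v j" using normal_vertex[OF i] by simp
  also have "\<dots> \<in> \<int>"
    using \<open>j \<le> CARD('n)\<close> by (intro inner_lattice_point_Ints lattice_point_normal[OF i] lattice_vertex)
  finally show ?thesis .
qed

lemma height_Ints: "i \<le> CARD('n) \<Longrightarrow> height i \<in> \<int>"
  unfolding height_def
  by (intro Ints_diff offset_Ints inner_lattice_point_Ints lattice_point_normal lattice_vertex)

lemma height_eq_1_if_less_2:
  assumes "i \<le> CARD('n)" "height i < 2"
  shows "height i = 1"
proof -
  obtain k where k: "height i = of_int k" using height_Ints[OF assms(1)] by (rule Ints_cases)
  then have "0 < k" "k < 2" using height_pos[OF assms(1)] assms(2) by simp_all
  then show ?thesis using k by simp
qed

lemma normal_halfspace:
  assumes "i \<le> CARD('n)"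
  shows "vertex_hull \<subseteq> {x. offset i \<le> normal i \<bullet> x}"
    and "opposite_facet i \<subseteq> {x. normal i \<bullet> x = offset i}"
proof -
  show "vertex_hull \<subseteq> {x. offset i \<le> normal i \<bullet> x}"
  proof (rule vertex_hull_subset_halfspace_ge)
    fix j assume "j \<le> CARD('n)"
    then show "offset i \<le> normal i \<bullet> v j"
      using height_pos[OF assms] normal_vertex[OF assms] by (cases "j = i") (auto simp: height_def)
  qed
  show "opposite_facet i \<subseteq> {x. normal i \<bullet> x = offset i}"
    unfolding opposite_facet_def using normal_vertex[OF assms]
    by (intro hull_minimal) (auto simp: convex_hyperplane)
qed

lemma prim_inner_normal_opposite_facet:
  "i \<le> CARD('n) \<Longrightarrow> prim_inner_normal vertex_hull (opposite_facet i) (normal i) (offset i)"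
  unfolding prim_inner_normal_def using normal_halfspace primitive_normal by blast

text \<open>Any other primitive inner normal of the facet is a positive real multiple of \<open>normal i\<close>,
  by affine independence, hence equal to it.\<close>
lemma prim_inner_normal_opposite_facet_unique:
  assumes i: "i \<le> CARD('n)" and cb: "prim_inner_normal vertex_hull (opposite_facet i) c b"
  shows "c = normal i \<and> b = offset i"
proof -
  have c_vertex: "c \<bullet> v j = b" if "j \<le> CARD('n)" "j \<noteq> i" for j
    using cb that unfolding prim_inner_normal_def opposite_facet_def by (auto intro!: hull_inc)
  have "b \<le> c \<bullet> v i"
    using cb vertex_in_vertex_hull[OF i] unfolding prim_inner_normal_def by auto
  obtain j0 where j0: "j0 \<le> CARD('n)" "j0 \<noteq> i" using ex_other_vertex[OF i] by blast
  have c_prim: "primitive_vec c" using cb by (simp add: prim_inner_normal_def)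
  define m where "m = c \<bullet> v i - b"
  have "m \<in> \<int>"
    unfolding m_def c_vertex[OF j0, symmetric] using c_prim j0 i
    by (intro Ints_diff inner_lattice_point_Ints lattice_vertex primitive_vec_lattice_point)
  have "c - (m / height i) *\<^sub>R normal i = 0"
  proof (rule eq_zero_if_inner_const_on_vertices)
    fix j assume j: "j \<le> CARD('n)"
    show "(c - (m / height i) *\<^sub>R normal i) \<bullet> v j = b - (m / height i) * offset i"
    proof (cases "j = i")
      case True
      then show ?thesis using height_pos[OF i]
        by (simp add: inner_diff_left m_def height_def field_simps)
    qed (simp add: inner_diff_left c_vertex j normal_vertex[OF i])
  qed
  then have c: "c = (m / height i) *\<^sub>R normal i" by simp
  then have "m \<noteq> 0" using primitive_vec_nonzero[OF c_prim] by auto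
  with \<open>b \<le> c \<bullet> v i\<close> have "m > 0" by (simp add: m_def)
  obtain p q where "height i = of_int p" "m = of_int q"
    using height_Ints[OF i] \<open>m \<in> \<int>\<close> by (metis Ints_cases)
  with c height_pos[OF i] \<open>m > 0\<close> have "c = normal i"
    by (intro primitive_vec_eq_if_positive_multiples[OF c_prim primitive_normal[OF i], of p q])
      auto
  with c_vertex[OF j0] normal_vertex[OF i j0] show ?thesis by simp
qed

lemma facet_dist_opposite_facet:
  assumes "i \<le> CARD('n)"
  shows "facet_dist vertex_hull (opposite_facet i) y = normal i \<bullet> y - offset i"
  unfolding facet_dist_def
  using prim_inner_normal_opposite_facet[OF assms]
    prim_inner_normal_opposite_facet_unique[OF assms]
  by (intro the_equality) blast+

lemma facet_of_vertex_hull_iff: "F facet_of vertex_hull \<longleftrightarrow> (\<exists>i\<le>CARD('n). F = opposite_facet i)"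
proof -
  have "v ` {..CARD('n)} - {v i} = v ` ({..CARD('n)} - {i})" if "i \<le> CARD('n)" for i
    using inj_vertex that by (auto simp: inj_on_def)
  moreover have "opposite_facet i \<noteq> {}" if "i \<le> CARD('n)" for i
    using ex_other_vertex[OF that] by (auto simp: opposite_facet_def)
  ultimately show ?thesis
    unfolding vertex_hull_def facet_of_convex_hull_affine_independent[OF affine_independent]
    by (auto simp: opposite_facet_def vertex_hull_def)
qed

lemma poly_dist_vertex_hull:
  "poly_dist vertex_hull y = Min ((\<lambda>i. normal i \<bullet> y - offset i) ` {..CARD('n)})"
proof -
  have "{facet_dist vertex_hull F y | F. F facet_of vertex_hull} =
      (\<lambda>i. facet_dist vertex_hull (opposite_facet i) y) ` {..CARD('n)}"
    unfolding facet_of_vertex_hull_iff by blast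
  also have "\<dots> = (\<lambda>i. normal i \<bullet> y - offset i) ` {..CARD('n)}"
    by (rule image_cong) (simp_all add: facet_dist_opposite_facet)
  finally show ?thesis by (simp add: poly_dist_def)
qed

lemma inner_level_vertex_hull_nonempty_iff:
  "inner_level vertex_hull s \<noteq> {} \<longleftrightarrow> (\<exists>y. \<forall>i\<le>CARD('n). s \<le> normal i \<bullet> y - offset i)"
  by (auto simp: inner_level_def poly_dist_vertex_hull Min_ge_iff)

lemma sum_facet_dist_div_height:
  "(\<Sum>i\<le>CARD('n). (normal i \<bullet> y - offset i) / height i) = 1"
proof -
  define d where "d = (\<Sum>i\<le>CARD('n). (1 / height i) *\<^sub>R normal i)"
  define e where "e = (\<Sum>i\<le>CARD('n). offset i / height i) + 1"
  have affine: "(\<Sum>i\<le>CARD('n). (normal i \<bullet> x - offset i) / height i) - 1 = d \<bullet> x - e" for x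
    by (simp add: d_def e_def inner_sum_left diff_divide_distrib sum_subtractf)
  have at_vertex: "(\<Sum>i\<le>CARD('n). (normal i \<bullet> v j - offset i) / height i) = 1"
    if j: "j \<le> CARD('n)" for j
  proof -
    have "(\<Sum>i\<le>CARD('n). (normal i \<bullet> v j - offset i) / height i) =
        (\<Sum>i\<le>CARD('n). if i = j then 1 else 0)"
      using j height_pos[OF j] by (intro sum.cong) (auto simp: normal_vertex simp flip: height_def)
    then show ?thesis using j by simp
  qed
  have "d = 0"
  proof (rule eq_zero_if_inner_const_on_vertices)
    fix j assume "j \<le> CARD('n)"
    then show "d \<bullet> v j = e" using affine[of "v j"] at_vertex[of j] by simp
  qed
  then show ?thesis using affine[of y] affine[of "v 0"] at_vertex[of 0] by simp
qed

lemma inv_height_sum_pos: "(\<Sum>i\<le>CARD('n). 1 / height i) > 0"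
  using height_pos by (intro sum_pos) auto

lemma inv_height_sum_le_if_inner_level_nonempty:
  assumes "inner_level vertex_hull s \<noteq> {}"
  shows "s * (\<Sum>i\<le>CARD('n). 1 / height i) \<le> 1"
proof -
  obtain y where y: "\<And>i. i \<le> CARD('n) \<Longrightarrow> s \<le> normal i \<bullet> y - offset i"
    using assms unfolding inner_level_vertex_hull_nonempty_iff by auto
  have "s * (\<Sum>i\<le>CARD('n). 1 / height i) = (\<Sum>i\<le>CARD('n). s / height i)"
    by (simp add: sum_distrib_left)
  also have "\<dots> \<le> (\<Sum>i\<le>CARD('n). (normal i \<bullet> y - offset i) / height i)"
    using y height_pos by (intro sum_mono divide_right_mono) (auto intro: less_imp_le)
  finally show ?thesis by (simp add: sum_facet_dist_div_height)
qed

lemma ex_point_equidistant_from_facets: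
  "\<exists>y. \<forall>i\<le>CARD('n). normal i \<bullet> y - offset i = 1 / (\<Sum>i\<le>CARD('n). 1 / height i)"
proof -
  define \<sigma> where "\<sigma> = (\<Sum>i\<le>CARD('n). 1 / height i)"
  define w where "w j = (1 / height j) / \<sigma>" for j
  have "\<sigma> > 0" using inv_height_sum_pos by (simp add: \<sigma>_def)
  have "(\<Sum>j\<le>CARD('n). w j) = (\<Sum>j\<le>CARD('n). 1 / height j) / \<sigma>"
    unfolding w_def by (rule sum_divide_distrib[symmetric])
  also have "\<dots> = 1" using \<open>\<sigma> > 0\<close> by (simp add: \<sigma>_def)
  finally have "(\<Sum>j\<le>CARD('n). w j) = 1" .
  define y where "y = (\<Sum>j\<le>CARD('n). w j *\<^sub>R v j)"
  have "normal i \<bullet> y - offset i = 1 / \<sigma>" if i: "i \<le> CARD('n)" for i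
  proof -
    have "normal i \<bullet> y - offset i = (\<Sum>j\<le>CARD('n). w j * (normal i \<bullet> v j - offset i))"
      using \<open>(\<Sum>j\<le>CARD('n). w j) = 1\<close>
      by (simp add: y_def inner_sum_right right_diff_distrib sum_subtractf
          flip: sum_distrib_right)
    also have "\<dots> = (\<Sum>j\<le>CARD('n). if j = i then w i * height i else 0)"
      using i by (intro sum.cong) (auto simp: normal_vertex height_def)
    also have "\<dots> = 1 / \<sigma>" using i height_pos[OF i] by (simp add: w_def)
    finally show ?thesis .
  qed
  then show ?thesis unfolding \<sigma>_def by blast
qed

lemma mu_vertex_hull: "mu vertex_hull = (\<Sum>i\<le>CARD('n). 1 / height i)"
proof -
  define \<sigma> where "\<sigma> = (\<Sum>i\<le>CARD('n). 1 / height i)"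
  have "\<sigma> > 0" using inv_height_sum_pos by (simp add: \<sigma>_def)
  obtain y where y: "\<And>i. i \<le> CARD('n) \<Longrightarrow> normal i \<bullet> y - offset i = 1 / \<sigma>"
    using ex_point_equidistant_from_facets unfolding \<sigma>_def by blast
  have "{s. s > 0 \<and> inner_level vertex_hull s \<noteq> {}} = {0<..1 / \<sigma>}"
  proof (intro set_eqI iffI)
    fix s assume "s \<in> {s. s > 0 \<and> inner_level vertex_hull s \<noteq> {}}"
    then show "s \<in> {0<..1 / \<sigma>}"
      using inv_height_sum_le_if_inner_level_nonempty \<open>\<sigma> > 0\<close>
      by (auto simp: \<sigma>_def field_simps)
  next
    fix s assume "s \<in> {0<..1 / \<sigma>}"
    then show "s \<in> {s. s > 0 \<and> inner_level vertex_hull s \<noteq> {}}"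
      using y unfolding inner_level_vertex_hull_nonempty_iff by (auto intro!: exI[of _ y])
  qed
  then show ?thesis using \<open>\<sigma> > 0\<close> by (simp add: mu_def \<sigma>_def)
qed

lemma facet_dist_vertex:
  "i \<le> CARD('n) \<Longrightarrow> facet_dist vertex_hull (opposite_facet i) (v i) = height i"
  by (simp add: facet_dist_opposite_facet height_def)

lemma heights_eq_2_if_mu_ge:
  assumes mu: "(real CARD('n) + 1) / 2 \<le> mu vertex_hull"
    and no_1: "\<And>i. i \<le> CARD('n) \<Longrightarrow> height i \<noteq> 1"
  shows "mu vertex_hull = (real CARD('n) + 1) / 2" and "\<And>i. i \<le> CARD('n) \<Longrightarrow> height i = 2"
proof -
  have inv_le: "1 / height i \<le> 1 / 2" if "i \<le> CARD('n)" for i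
    using height_eq_1_if_less_2[OF that] no_1[OF that] by (force intro: divide_left_mono)
  have sum_half: "(\<Sum>i\<le>CARD('n). 1 / 2) = (real CARD('n) + 1) / (2::real)" by simp
  have "mu vertex_hull \<le> (real CARD('n) + 1) / 2"
    unfolding mu_vertex_hull sum_half[symmetric] using inv_le by (intro sum_mono) auto
  with mu show "mu vertex_hull = (real CARD('n) + 1) / 2" by simp
  show "height i = 2" if i: "i \<le> CARD('n)" for i
  proof (rule ccontr)
    assume "height i \<noteq> 2"
    then have "2 < height i" using height_eq_1_if_less_2[OF i] no_1[OF i] by force
    then have "1 / height i < 1 / 2" by (intro frac_less2) auto
    then have "mu vertex_hull < (real CARD('n) + 1) / 2"
      unfolding mu_vertex_hull sum_half[symmetric] using inv_le i
      by (intro sum_strict_mono_ex1) auto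
    with mu show False by simp
  qed
qed

lemma lattice_pyramid_if_height_1:
  assumes i: "i \<le> CARD('n)" and "height i = 1"
  shows "lattice_pyramid vertex_hull"
  unfolding lattice_pyramid_def
proof (intro exI conjI)
  show "opposite_facet i facet_of vertex_hull" using i facet_of_vertex_hull_iff by blast
  show "v i extreme_point_of vertex_hull"
    using extreme_point_of_convex_hull_affine_independent[OF affine_independent] i
    by (auto simp: vertex_hull_def)
  show "v i \<notin> opposite_facet i"
    using normal_halfspace(2)[OF i] height_pos[OF i] by (auto simp: height_def)
  show "facet_dist vertex_hull (opposite_facet i) (v i) = 1"
    using facet_dist_vertex[OF i] assms(2) by simp
qed

lemma bdd_inner_vertex_hull:
  "bdd_above ((\<lambda>x. u \<bullet> x) ` vertex_hull)" "bdd_below ((\<lambda>x. u \<bullet> x) ` vertex_hull)"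
proof -
  have "vertex_hull \<subseteq> {x. u \<bullet> x \<le> Max ((\<lambda>j. u \<bullet> v j) ` {..CARD('n)})}"
    by (rule vertex_hull_subset_halfspace_le) simp
  then show "bdd_above ((\<lambda>x. u \<bullet> x) ` vertex_hull)" by (auto intro: bdd_aboveI2)
  have "vertex_hull \<subseteq> {x. Min ((\<lambda>j. u \<bullet> v j) ` {..CARD('n)}) \<le> u \<bullet> x}"
    by (rule vertex_hull_subset_halfspace_ge) simp
  then show "bdd_below ((\<lambda>x. u \<bullet> x) ` vertex_hull)" by (auto intro: bdd_belowI2)
qed

lemma width_ge_1:
  assumes "lattice_point u" "u \<noteq> 0"
  shows "1 \<le> (SUP x\<in>vertex_hull. u \<bullet> x) - (INF x\<in>vertex_hull. u \<bullet> x)"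
proof -
  obtain j where j: "j \<le> CARD('n)" "u \<bullet> v j \<noteq> u \<bullet> v 0"
    using eq_zero_if_inner_const_on_vertices[of u "u \<bullet> v 0"] assms(2) by blast
  have "u \<bullet> v j - u \<bullet> v 0 \<in> \<int>"
    using assms(1) j(1) by (intro Ints_diff inner_lattice_point_Ints lattice_vertex) auto
  then have gap: "1 \<le> \<bar>u \<bullet> v j - u \<bullet> v 0\<bar>" using j(2) by (intro Ints_abs_ge_1) auto
  have "u \<bullet> v k \<le> (SUP x\<in>vertex_hull. u \<bullet> x)" "(INF x\<in>vertex_hull. u \<bullet> x) \<le> u \<bullet> v k"
    if "k \<le> CARD('n)" for k
    using vertex_in_vertex_hull[OF that] bdd_inner_vertex_hull by (auto intro: cSUP_upper cINF_lower)
  from this[of j] this[of 0] j(1) gap show ?thesis by linarith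
qed

lemma lattice_width_eq_1_if_strip:
  assumes u: "lattice_point u" "u \<noteq> 0"
    and strip: "\<And>j. j \<le> CARD('n) \<Longrightarrow> m \<le> u \<bullet> v j \<and> u \<bullet> v j \<le> m + 1"
  shows "lattice_width vertex_hull = 1"
proof -
  let ?w = "\<lambda>u. (SUP x\<in>vertex_hull. u \<bullet> x) - (INF x\<in>vertex_hull. u \<bullet> x)"
  have "vertex_hull \<noteq> {}" using vertex_in_vertex_hull[of 0] by auto
  then have "(SUP x\<in>vertex_hull. u \<bullet> x) \<le> m + 1" "m \<le> (INF x\<in>vertex_hull. u \<bullet> x)"
    using vertex_hull_subset_halfspace_le[of u "m + 1"] vertex_hull_subset_halfspace_ge[of m u] strip
    by (auto intro!: cSUP_least cINF_greatest)
  then have "?w u \<le> 1" by linarith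
  moreover have "(INF u\<in>{u. lattice_point u \<and> u \<noteq> 0}. ?w u) \<le> ?w u"
    using u width_ge_1 by (intro cINF_lower) (auto intro: bdd_belowI2[where m = 1])
  moreover have "1 \<le> (INF u\<in>{u. lattice_point u \<and> u \<noteq> 0}. ?w u)"
    using u width_ge_1 by (intro cINF_greatest) auto
  ultimately show ?thesis unfolding lattice_width_def by linarith
qed

lemma lattice_width_eq_1_if_height_1:
  assumes i: "i \<le> CARD('n)" and "height i = 1"
  shows "lattice_width vertex_hull = 1"
proof (rule lattice_width_eq_1_if_strip)
  show "lattice_point (normal i)" "normal i \<noteq> 0"
    using primitive_normal[OF i] by (auto simp: primitive_vec_def)
  show "offset i \<le> normal i \<bullet> v j \<and> normal i \<bullet> v j \<le> offset i + 1" if "j \<le> CARD('n)" for j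
    using normal_vertex[OF i that] assms(2) by (cases "j = i") (auto simp: height_def)
qed

lemma normal_edge_if_heights_2:
  assumes "\<And>i. i \<le> CARD('n) \<Longrightarrow> height i = 2" and "i \<in> {1..CARD('n)}" "j \<le> CARD('n)"
  shows "normal i \<bullet> (v j - v 0) = (if j = i then 2 else 0)"
  using assms normal_vertex[of i j] normal_vertex[of i 0]
  by (auto simp: inner_diff_right height_def)

lemma Ints_diff_double_floor_half:
  assumes "x \<in> \<int>"
  shows "x - 2 * of_int \<lfloor>x / 2\<rfloor> = (if x / 2 \<in> \<int> then 0 else (1::real))"
proof -
  obtain k where x: "x = of_int k" using assms by (rule Ints_cases)
  have "x - 2 * of_int \<lfloor>x / 2\<rfloor> = of_int (k - 2 * (k div 2))"
    by (simp add: x floor_divide_of_int_eq[where l = 2, simplified])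
  also have "\<dots> = of_int (k mod 2)" by (simp only: minus_mult_div_eq_mod)
  moreover have "x / 2 \<in> \<int> \<longleftrightarrow> even k"
  proof
    assume "x / 2 \<in> \<int>"
    then obtain z where "x / 2 = of_int z" by (rule Ints_cases)
    then have "k = 2 * z" using x by (simp add: field_simps flip: of_int_mult)
    then show "even k" by simp
  next
    assume "even k"
    then show "x / 2 \<in> \<int>" using x by (auto elim!: evenE)
  qed
  ultimately show ?thesis by (auto simp: even_iff_mod_2_eq_zero odd_iff_mod_2_eq_one)
qed

lemma lattice_width_eq_1_if_odd_edge:
  assumes heights: "\<And>i. i \<le> CARD('n) \<Longrightarrow> height i = 2"
    and j1: "j1 \<le> CARD('n)" and odd: "(v j1 - v 0) $ r / 2 \<notin> \<int>"
  shows "lattice_width vertex_hull = 1"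
proof -
  define e where "e j = (v j - v 0) $ r" for j
  have e_Ints: "e j \<in> \<int>" if "j \<le> CARD('n)" for j
    using lattice_vertex[OF that] lattice_vertex[of 0] by (simp add: e_def lattice_point_def)
  define u where "u = axis r 1 - (\<Sum>i\<in>{1..CARD('n)}. of_int \<lfloor>e i / 2\<rfloor> *\<^sub>R normal i)"
  have u_edge: "u \<bullet> (v j - v 0) = e j - 2 * of_int \<lfloor>e j / 2\<rfloor>" if j: "j \<le> CARD('n)" for j
  proof -
    have "u \<bullet> (v j - v 0) = e j - (\<Sum>i\<in>{1..CARD('n)}. of_int \<lfloor>e i / 2\<rfloor> * (normal i \<bullet> (v j - v 0)))"
      by (simp add: u_def e_def inner_diff_left inner_sum_left inner_axis')
    also have "\<dots> = e j - (\<Sum>i\<in>{1..CARD('n)}. if i = j then 2 * of_int \<lfloor>e j / 2\<rfloor> else 0)"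
      using normal_edge_if_heights_2[OF heights _ j] by (intro arg_cong2[where f = minus] sum.cong) auto
    also have "\<dots> = e j - 2 * of_int \<lfloor>e j / 2\<rfloor>"
      using j by (cases "j = 0") (auto simp: e_def)
    finally show ?thesis .
  qed
  have u_vertex: "u \<bullet> v j - u \<bullet> v 0 = (if e j / 2 \<in> \<int> then 0 else 1)" if "j \<le> CARD('n)" for j
    using u_edge[OF that] Ints_diff_double_floor_half[OF e_Ints[OF that]] by (simp add: inner_diff_right)
  have "lattice_point u"
    unfolding u_def
    by (intro lattice_point_diff lattice_point_axis lattice_point_sum lattice_point_scaleR
        lattice_point_normal) auto
  moreover have "u \<noteq> 0" using u_vertex[OF j1] odd by (auto simp: e_def)
  ultimately show ?thesis
    by (rule lattice_width_eq_1_if_strip[where m = "u \<bullet> v 0"]) (auto dest: u_vertex split: if_splits)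
qed

definition facet_dist_map :: "real^'n \<Rightarrow> real^'n" where
  "facet_dist_map x = (\<chi> k. normal (edge_index k) \<bullet> x - offset (edge_index k))"

lemma facet_dist_map_vertex_0: "facet_dist_map (v 0) = 0"
  using normal_vertex edge_index_range by (fastforce simp: facet_dist_map_def vec_eq_iff)

lemma facet_dist_map_vertex:
  assumes heights: "\<And>i. i \<le> CARD('n) \<Longrightarrow> height i = 2" and j: "j \<in> {1..CARD('n)}"
  shows "facet_dist_map (v j) = 2 *\<^sub>R axis (edge_coord j) 1"
proof -
  have "normal (edge_index k) \<bullet> v j - offset (edge_index k) = normal (edge_index k) \<bullet> (v j - v 0)"
    for k
    using normal_vertex[of "edge_index k" 0] edge_index_range[of k] by (simp add: inner_diff_right)
  moreover have "j = edge_index k \<longleftrightarrow> edge_coord j = k" for k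
    using j by auto
  ultimately show ?thesis
    using normal_edge_if_heights_2[OF heights edge_index_range] j
    by (auto simp: facet_dist_map_def vec_eq_iff axis_def)
qed

lemma facet_dist_map_vertices:
  assumes "\<And>i. i \<le> CARD('n) \<Longrightarrow> height i = 2"
  shows "facet_dist_map ` v ` {..CARD('n)} = (\<lambda>x. 2 *\<^sub>R x) ` insert 0 {axis k 1 | k. True}"
proof -
  have "{..CARD('n)} = insert 0 (edge_index ` UNIV)"
    using bij_edge_index by (auto simp: bij_betw_def)
  then show ?thesis
    using facet_dist_map_vertex[OF assms edge_index_range]
    by (auto simp: image_image facet_dist_map_vertex_0)
qed

lemma unimodular_facet_dist_map:
  assumes heights: "\<And>i. i \<le> CARD('n) \<Longrightarrow> height i = 2"
    and even: "\<And>j r. j \<le> CARD('n) \<Longrightarrow> (v j - v 0) $ r / 2 \<in> \<int>"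
  shows "unimodular_map facet_dist_map"
proof -
  define A :: "real^'n^'n" where "A = (\<chi> k. normal (edge_index k))"
  define H :: "real^'n^'n" where "H = (\<chi> l. (1 / 2) *\<^sub>R (v (edge_index l) - v 0))"
  have A_Ints: "\<And>k r. A $ k $ r \<in> \<int>"
    using lattice_point_normal edge_index_range by (auto simp: A_def lattice_point_def)
  have H_Ints: "\<And>r l. transpose H $ r $ l \<in> \<int>"
    using even edge_index_range by (auto simp: H_def transpose_def)
  have "normal (edge_index k) \<bullet> (v (edge_index l) - v 0) = (if k = l then 2 else 0)" for k l
    using normal_edge_if_heights_2[OF heights edge_index_range[of k], of "edge_index l"]
      edge_index_range[of l]
    by (auto simp: edge_index_eq_iff)
  then have "A ** transpose H = mat 1"
    by (simp add: vec_eq_iff matrix_mult_transpose_component A_def H_def mat_def)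
  then have "\<bar>det A\<bar> = 1" using A_Ints H_Ints by (rule abs_det_eq_1_if_integral_inverse[rotated 2])
  moreover have "lattice_point (\<chi> k. - offset (edge_index k))"
    using offset_Ints edge_index_range by (auto simp: lattice_point_def)
  moreover have "facet_dist_map = (\<lambda>x. A *v x + (\<chi> k. - offset (edge_index k)))"
    by (auto simp: facet_dist_map_def A_def matrix_vector_mul_component vec_eq_iff)
  ultimately show ?thesis using A_Ints by (auto simp: unimodular_map_def)
qed

lemma unimod_equiv_double_std_simplex_if_even_edges:
  assumes heights: "\<And>i. i \<le> CARD('n) \<Longrightarrow> height i = 2"
    and even: "\<And>j r. j \<le> CARD('n) \<Longrightarrow> (v j - v 0) $ r / 2 \<in> \<int>"
  shows "unimod_equiv vertex_hull ((\<lambda>x. 2 *\<^sub>R x) ` std_simplex)"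
proof -
  obtain A t where f: "facet_dist_map = (\<lambda>x. A *v x + t)"
    using unimodular_facet_dist_map[OF assms] by (auto simp: unimodular_map_def)
  have "facet_dist_map ` vertex_hull = convex hull (facet_dist_map ` v ` {..CARD('n)})"
    unfolding vertex_hull_def f by (rule affine_image_convex_hull)
  also have "\<dots> = convex hull ((\<lambda>x. 2 *\<^sub>R x) ` insert 0 {axis k 1 | k. True})"
    using facet_dist_map_vertices[OF heights] by simp
  also have "\<dots> = (\<lambda>x. 2 *\<^sub>R x) ` std_simplex"
    by (simp only: std_simplex_def convex_hull_scaling)
  finally show ?thesis
    using unimodular_facet_dist_map[OF assms] by (auto simp: unimod_equiv_def)
qed

lemma lattice_pyramid_if_mu_large:
  assumes "(real CARD('n) + 1) / 2 < mu vertex_hull \<or>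
    (mu vertex_hull = (real CARD('n) + 1) / 2 \<and> (\<exists>i\<le>CARD('n). height i \<noteq> 2))"
  shows "lattice_pyramid vertex_hull"
proof -
  have "\<exists>i\<le>CARD('n). height i = 1"
    using heights_eq_2_if_mu_ge assms by (metis less_eq_real_def order_less_irrefl)
  then show ?thesis using lattice_pyramid_if_height_1 by blast
qed

lemma lattice_width_eq_1_if_mu_large:
  assumes mu: "(real CARD('n) + 1) / 2 \<le> mu vertex_hull"
    and not_2\<Delta>: "\<not> unimod_equiv vertex_hull ((\<lambda>x. 2 *\<^sub>R x) ` std_simplex)"
  shows "lattice_width vertex_hull = 1"
proof (cases "\<exists>i\<le>CARD('n). height i = 1")
  case True
  then show ?thesis using lattice_width_eq_1_if_height_1 by blast
next
  case False
  then have heights: "\<And>i. i \<le> CARD('n) \<Longrightarrow> height i = 2"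
    using heights_eq_2_if_mu_ge(2)[OF mu] by blast
  then obtain j r where "j \<le> CARD('n)" "(v j - v 0) $ r / 2 \<notin> \<int>"
    using unimod_equiv_double_std_simplex_if_even_edges not_2\<Delta> by blast
  then show ?thesis using lattice_width_eq_1_if_odd_edge[OF heights] by blast
qed

end

theorem corollary3p10:
  fixes v :: "nat \<Rightarrow> real^'n" and P :: "(real^'n) set"
  assumes lat: "\<forall>i\<le>CARD('n). lattice_point (v i)"
    and inj: "inj_on v {..CARD('n)}"
    and indep: "\<not> affine_dependent (v ` {..CARD('n)})"
    and P: "P = convex hull (v ` {..CARD('n)})"
  shows "((mu P > (real CARD('n) + 1) / 2 \<or>
           (mu P = (real CARD('n) + 1) / 2 \<and>
            (\<exists>i\<le>CARD('n). facet_dist P (convex hull (v ` ({..CARD('n)} - {i}))) (v i) \<noteq> 2)))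
         \<longrightarrow> lattice_pyramid P) \<and>
         ((mu P \<ge> (real CARD('n) + 1) / 2 \<and> \<not> unimod_equiv P ((\<lambda>x. 2 *\<^sub>R x) ` std_simplex))
         \<longrightarrow> lattice_width P = 1)"
proof -
  interpret lattice_simplex v
    using lat inj indep by unfold_locales auto
  have facet: "facet_dist vertex_hull (convex hull (v ` ({..CARD('n)} - {i}))) (v i) = height i"
    if "i \<le> CARD('n)" for i
    using facet_dist_vertex[OF that] by (simp add: opposite_facet_def)
  have "P = vertex_hull" by (simp add: P vertex_hull_def)
  then show ?thesis
    using lattice_pyramid_if_mu_large lattice_width_eq_1_if_mu_large by (simp add: facet cong: conj_cong)
qed

end
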